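(* Let $r$ be a parameter (an integer or an indeterminate), and let $F_r=(f_{n,k})_{n,k\ge 0}$ be the $f$-matrix of the ordinary Riordan array $H_r=\left(\frac{1}{1-x},\frac{x(1+rx)}{1-x}\right)$, i.e. $F_r=H_r\cdot \mathbf{B}$, where $\mathbf{B}=\left(\binom{n}{k}\right)_{n,k\ge0}$. Then the bivariate generating function of $F_r$ is $$\sum_{n,k\ge 0} f_{n,k}x^ny^k=\frac{1}{1-(y+2)x-r(y+1)x^2},$$ and the bivariate generating function of the reversal $\left(f_{n,n-k}\right)_{0\le k\le n}$ of $F_r$ is $$\sum_{n\ge 0}\sum_{k=0}^n f_{n,n-k}x^ny^k=\frac{1}{1-(2y+1)x-ry(y+1)x^2}.$$
   Context: An ordinary Riordan array $(g(x),f(x))$, where $g(x)=1+g_1x+g_2x^2+\cdots$ and $f(x)=x+f_2x^2+\cdots$ are formal power series, is the lower-triangular matrix $(a_{n,k})_{n,k\ge0}$ with $a_{n,k}=[x^n]g(x)f(x)^k$. The binomial matrix $\mathbf{B}=\left(\binom{n}{k}\right)_{n,k\ge0}$ equals the Riordan array $\left(\frac{1}{1-x},\frac{x}{1-x}\right)$. For a lower-triangular matrix $M$ (here a Pascal-like matrix, i.e. $a_{n,0}=a_{n,n}=1$ and $a_{n,n-k}=a_{n,k}$), its $f$-matrix is the matrix product $M\cdot\mathbf{B}$. The reversal of a lower-triangular matrix $(a_{n,k})$ is the matrix whose $(n,k)$ entry is $a_{n,n-k}$ for $0\le k\le n$ (and $0$ for $k>n$). The bivariate generating function of $(a_{n,k})$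 is $\sum_{n,k}a_{n,k}x^ny^k$. *)

theory Defs
  imports "HOL-Computational_Algebra.Computational_Algebra"
begin

definition riordan :: "'a::comm_ring_1 fps \<Rightarrow> 'a fps \<Rightarrow> nat \<Rightarrow> nat \<Rightarrow> 'a" where
  "riordan g f n k = fps_nth (g * f ^ k) n"

definition geom :: "'a::comm_ring_1 fps" where
  "geom = Abs_fps (\<lambda>n. 1)"

definition H :: "'a::comm_ring_1 \<Rightarrow> nat \<Rightarrow> nat \<Rightarrow> 'a" where
  "H r = riordan geom (fps_X * (1 + fps_const r * fps_X) * geom)"

text \<open>Product of lower-triangular matrices M and the binomial matrix B:
  (M B)(n,k) = sum over j <= n of M(n,j) * binom(j,k).\<close>
definition fmatrix :: "(nat \<Rightarrow> nat \<Rightarrow> 'a::comm_ring_1) \<Rightarrow> nat \<Rightarrow> nat \<Rightarrow> 'a" where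
  "fmatrix M n k = (\<Sum>j\<le>n. M n j * of_nat (j choose k))"

definition reversal :: "(nat \<Rightarrow> nat \<Rightarrow> 'a::zero) \<Rightarrow> nat \<Rightarrow> nat \<Rightarrow> 'a" where
  "reversal M n k = (if k \<le> n then M n (n - k) else 0)"

definition bgf :: "(nat \<Rightarrow> nat \<Rightarrow> 'a::comm_ring_1) \<Rightarrow> 'a poly fps" where
  "bgf M = Abs_fps (\<lambda>n. \<Sum>k\<le>n. monom (M n k) k)"

definition Y :: "'a::comm_ring_1 poly" where
  "Y = [:0, 1:]"

end

(* Both generating functions are weighted row sums of H_r: expanding the binomial matrix gives
   sum_k f(n,k) y^k = sum_j h(n,j) (1+y)^j and sum_k f(n,n-k) y^k = sum_j h(n,j) (1+y)^j y^(n-j).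
   For a Riordan array (g, x h) the row sums sum_j h(n,j) c^j w^(n-j) have generating function
   g(wx) / (1 - c x h(wx)), the fundamental theorem of Riordan arrays applied to the dilated
   series. With g = 1/(1-x), h = (1+rx)/(1-x) and (c,w) = (1+y,1) resp. (1+y,y) this is
   1/((1 - wx) - c x (1 + r w x)), i.e. the two stated rational functions. *)

theory Submission
  imports Defs
begin

definition fps_dilate :: "'a::comm_ring_1 poly \<Rightarrow> 'a fps \<Rightarrow> 'a poly fps" where
  "fps_dilate w a = Abs_fps (\<lambda>n. smult (a $ n) (w ^ n))"

lemma fps_dilate_nth [simp]: "fps_dilate w a $ n = smult (a $ n) (w ^ n)"
  by (simp add: fps_dilate_def)

lemma fps_dilate_mult: "fps_dilate w (a * b) = fps_dilate w a * fps_dilate w b"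
proof (rule fps_ext)
  fix n
  have "fps_dilate w (a * b) $ n = (\<Sum>i=0..n. smult (a $ i * b $ (n - i)) (w ^ n))"
    by (simp add: fps_mult_nth smult_sum)
  also have "\<dots> = (\<Sum>i=0..n. smult (a $ i) (w ^ i) * smult (b $ (n - i)) (w ^ (n - i)))"
    by (intro sum.cong refl) (simp add: mult.commute flip: power_add)
  finally show "fps_dilate w (a * b) $ n = (fps_dilate w a * fps_dilate w b) $ n"
    by (simp add: fps_mult_nth)
qed

lemma fps_dilate_power: "fps_dilate w (a ^ j) = fps_dilate w a ^ j"
proof (induction j)
  case 0
  show ?case by (rule fps_ext) simp
next
  case (Suc j)
  then show ?case by (simp add: fps_dilate_mult)
qed

lemma fps_dilate_geom: "fps_dilate w geom * (1 - fps_const w * fps_X) = 1"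
proof (rule fps_ext)
  fix n
  have "fps_dilate w geom * (1 - fps_const w * fps_X)
      = fps_dilate w geom - fps_X * (fps_const w * fps_dilate w geom)"
    by (simp add: algebra_simps)
  then show "(fps_dilate w geom * (1 - fps_const w * fps_X)) $ n = 1 $ n"
    by (cases n) (simp_all add: geom_def)
qed

lemma fps_dilate_linear:
  "fps_dilate w (1 + fps_const r * fps_X) = 1 + fps_const ([:r:] * w) * fps_X"
  by (rule fps_ext) (auto simp: fps_X_def)

lemma riordan_fps_X_mult:
  "riordan g (fps_X * h) n j = (if j \<le> n then (g * h ^ j) $ (n - j) else 0)"
proof -
  have "g * (fps_X * h) ^ j = fps_X ^ j * (g * h ^ j)"
    by (simp add: power_mult_distrib mult_ac)
  then show ?thesis
    by (simp add: riordan_def fps_X_power_mult_nth)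
qed

text \<open>The sum over \<open>j\<close> is infinite, so coefficient \<open>n\<close> is read off the truncation
  \<open>T = g(wx) \<Sum>j\<le>n. (c x h(wx))^j\<close>, for which \<open>T (1 - c x h(wx)) = g(wx) (1 - (c x h(wx))^(n+1))\<close>.\<close>
lemma riordan_weighted_row_sums:
  fixes g h :: "'a::comm_ring_1 fps" and c w :: "'a poly"
  defines "A \<equiv> Abs_fps (\<lambda>n. \<Sum>j\<le>n. smult (riordan g (fps_X * h) n j) (c ^ j * w ^ (n - j)))"
  shows "A * (1 - fps_const c * fps_X * fps_dilate w h) = fps_dilate w g"
proof (rule fps_ext)
  fix n
  let ?q = "fps_const c * fps_X * fps_dilate w h"
  define T where "T = fps_dilate w g * (\<Sum>j\<le>n. ?q ^ j)"
  have T_nth: "T $ i = A $ i" if "i \<le> n" for i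
  proof -
    have "T = (\<Sum>j\<le>n. fps_X ^ j * (fps_const (c ^ j) * fps_dilate w (g * h ^ j)))"
      by (simp add: T_def sum_distrib_left fps_dilate_mult fps_dilate_power
          power_mult_distrib fps_const_power mult_ac)
    then have "T $ i = (\<Sum>j\<le>n. if j \<le> i then c ^ j * smult ((g * h ^ j) $ (i - j)) (w ^ (i - j)) else 0)"
      by (auto simp: fps_sum_nth fps_X_power_mult_nth intro!: sum.cong)
    also have "\<dots> = (\<Sum>j\<le>i. c ^ j * smult ((g * h ^ j) $ (i - j)) (w ^ (i - j)))"
      using that by (intro sum.mono_neutral_cong_right) auto
    also have "\<dots> = A $ i"
      unfolding A_def fps_nth_Abs_fps
      by (intro sum.cong refl) (simp add: riordan_fps_X_mult mult_smult_right mult.commute)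
    finally show ?thesis .
  qed
  have "fps_cutoff (Suc n) A = fps_cutoff (Suc n) T"
    by (rule fps_ext) (simp add: T_nth)
  then have "(A * (1 - ?q)) $ n = (T * (1 - ?q)) $ n"
    by (metis fps_cutoff_left_mult_nth lessI)
  also have "T * (1 - ?q) = fps_dilate w g * ((1 - ?q) * (\<Sum>j\<le>n. ?q ^ j))"
    by (simp only: T_def mult_ac)
  also have "\<dots> = fps_dilate w g * (1 - ?q ^ Suc n)"
    by (simp only: sum_gp_basic)
  also have "?q ^ Suc n = fps_X ^ Suc n * (fps_const c * fps_dilate w h) ^ Suc n"
    by (simp only: power_mult_distrib mult_ac)
  finally show "(A * (1 - ?q)) $ n = fps_dilate w g $ n"
    by (simp only: right_diff_distrib mult_1_right mult.left_commute[of "fps_dilate w g"]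
        fps_sub_nth fps_X_power_mult_nth) simp
qed

lemma H_weighted_row_sums:
  fixes r :: "'a::comm_ring_1" and c w :: "'a poly"
  shows "Abs_fps (\<lambda>n. \<Sum>j\<le>n. smult (H r n j) (c ^ j * w ^ (n - j))) *
      (1 - fps_const w * fps_X - fps_const c * fps_X * (1 + fps_const ([:r:] * w) * fps_X)) = 1"
    (is "?A * _ = 1")
proof -
  let ?h = "(1 + fps_const r * fps_X) * geom"
  have "fps_const c * fps_X * fps_dilate w ?h * (1 - fps_const w * fps_X)
      = fps_const c * fps_X * (1 + fps_const ([:r:] * w) * fps_X)"
    by (simp add: fps_dilate_mult fps_dilate_linear fps_dilate_geom mult.assoc)
  then have "1 - fps_const w * fps_X - fps_const c * fps_X * (1 + fps_const ([:r:] * w) * fps_X)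
      = (1 - fps_const c * fps_X * fps_dilate w ?h) * (1 - fps_const w * fps_X)"
    by (simp add: left_diff_distrib)
  moreover have "?A * (1 - fps_const c * fps_X * fps_dilate w ?h) = fps_dilate w geom"
    using riordan_weighted_row_sums[of geom ?h] by (simp add: H_def mult.assoc)
  ultimately show ?thesis
    by (simp add: fps_dilate_geom flip: mult.assoc)
qed

lemma Y_power: "(Y::'a::comm_ring_1 poly) ^ m = monom 1 m"
  by (simp add: Y_def monom_altdef)

lemma coeff_Y_plus_1_power: "coeff (((Y::'a::comm_ring_1 poly) + 1) ^ j) i = of_nat (j choose i)"
proof (cases "i \<le> j")
  case True
  then show ?thesis by (simp add: Y_def one_pCons coeff_linear_poly_power)
next
  case False
  have "degree (((Y::'a poly) + 1) ^ j) \<le> j"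
    by (rule order.trans[OF degree_power_le]) (simp add: Y_def one_pCons)
  then show ?thesis using False by (simp add: coeff_eq_0 binomial_eq_0)
qed

lemma coeff_Y_plus_1_power_mult_Y_power:
  "coeff (((Y::'a::comm_ring_1 poly) + 1) ^ j * Y ^ m) i
     = (if i \<le> j + m then of_nat (j choose (j + m - i)) else 0)"
proof -
  have "coeff (((Y::'a poly) + 1) ^ j * Y ^ m) i = (if i < m then 0 else of_nat (j choose (i - m)))"
    by (simp add: Y_power mult.commute[of _ "monom 1 m"] coeff_monom_mult coeff_Y_plus_1_power)
  also have "\<dots> = (if i \<le> j + m then of_nat (j choose (j + m - i)) else 0)"
    using binomial_symmetric[of "i - m" j] by (auto simp: binomial_eq_0)
  finally show ?thesis .
qed

lemma coeff_bgf: "coeff (bgf M $ n) i = (if i \<le> n then M n i else 0)"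
  by (simp add: bgf_def coeff_sum coeff_monom)

lemma bgf_fmatrix_nth:
  "bgf (fmatrix M) $ n = (\<Sum>j\<le>n. smult (M n j) ((Y + 1) ^ j))"
proof (rule poly_eqI)
  fix i
  show "coeff (bgf (fmatrix M) $ n) i = coeff (\<Sum>j\<le>n. smult (M n j) ((Y + 1) ^ j)) i"
    by (auto simp: coeff_bgf fmatrix_def coeff_sum coeff_Y_plus_1_power binomial_eq_0 intro!: sum.neutral)
qed

lemma bgf_reversal_fmatrix_nth:
  "bgf (reversal (fmatrix M)) $ n = (\<Sum>j\<le>n. smult (M n j) ((Y + 1) ^ j * Y ^ (n - j)))"
proof (rule poly_eqI)
  fix i
  show "coeff (bgf (reversal (fmatrix M)) $ n) i
      = coeff (\<Sum>j\<le>n. smult (M n j) ((Y + 1) ^ j * Y ^ (n - j))) i"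
    by (auto simp: coeff_bgf reversal_def fmatrix_def coeff_sum coeff_Y_plus_1_power_mult_Y_power
        intro!: sum.cong)
qed

theorem proposition2:
  fixes r :: "'a::comm_ring_1"
  shows "bgf (fmatrix (H r)) *
           (1 - fps_const (Y + 2) * fps_X - fps_const ([:r:] * (Y + 1)) * fps_X ^ 2) = 1 \<and>
         bgf (reversal (fmatrix (H r))) *
           (1 - fps_const (2 * Y + 1) * fps_X - fps_const ([:r:] * Y * (Y + 1)) * fps_X ^ 2) = 1"
proof
  have row_sums: "bgf (fmatrix (H r)) = Abs_fps (\<lambda>n. \<Sum>j\<le>n. smult (H r n j) ((Y + 1) ^ j * 1 ^ (n - j)))"
    by (rule fps_ext) (simp add: bgf_fmatrix_nth)
  have denominator: "1 - fps_const (Y + 2) * fps_X - fps_const ([:r:] * (Y + 1)) * fps_X ^ 2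
      = 1 - fps_const 1 * fps_X - fps_const (Y + 1) * fps_X * (1 + fps_const ([:r:] * 1) * fps_X)"
    by (simp add: algebra_simps power2_eq_square)
  show "bgf (fmatrix (H r)) *
      (1 - fps_const (Y + 2) * fps_X - fps_const ([:r:] * (Y + 1)) * fps_X ^ 2) = 1"
    unfolding row_sums denominator by (rule H_weighted_row_sums)
next
  have row_sums: "bgf (reversal (fmatrix (H r)))
      = Abs_fps (\<lambda>n. \<Sum>j\<le>n. smult (H r n j) ((Y + 1) ^ j * Y ^ (n - j)))"
    by (rule fps_ext) (simp add: bgf_reversal_fmatrix_nth)
  have denominator: "1 - fps_const (2 * Y + 1) * fps_X - fps_const ([:r:] * Y * (Y + 1)) * fps_X ^ 2
      = 1 - fps_const Y * fps_X - fps_const (Y + 1) * fps_X * (1 + fps_const ([:r:] * Y) * fps_X)"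
    by (simp add: algebra_simps power2_eq_square)
  show "bgf (reversal (fmatrix (H r))) *
      (1 - fps_const (2 * Y + 1) * fps_X - fps_const ([:r:] * Y * (Y + 1)) * fps_X ^ 2) = 1"
    unfolding row_sums denominator by (rule H_weighted_row_sums)
qed

end
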